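(* Let $n\ge 1$ and for $R>0$ let $P_n(R)$ be the set of monic degree-$n$ polynomials with integer coefficients having a real root $\lambda>1$ with all other roots strictly smaller than $\lambda$ in absolute value, and all of whose roots have absolute value at most $R$. Then $|P_n(R)|\sim R^{n(n+1)/2}$.
   Context: For positive functions $f,g$, $f\sim g$ means there is a constant $C>0$ such that $\frac1C f(R)\le g(R)\le C f(R)$ for all sufficiently large $R$. $|A|$ denotes the cardinality of a finite set $A$. *)

theory Defs
  imports "HOL-Computational_Algebra.Polynomial" Complex_Main
begin

definition perron_polys :: "nat \<Rightarrow> real \<Rightarrow> int poly set" where
  "perron_polys n R = {p. degree p = n \<and> lead_coeff p = 1 \<and>
     (\<exists>l::real. l > 1 \<and> poly (map_poly of_int p) (complex_of_real l) = 0 \<and>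
        (\<forall>z. poly (map_poly of_int p) z = 0 \<and> z \<noteq> complex_of_real l \<longrightarrow> cmod z < l)) \<and>
     (\<forall>z. poly (map_poly of_int p) z = (0::complex) \<longrightarrow> cmod z \<le> R)}"

end

theory Submission
  imports Defs "HOL-Computational_Algebra.Fundamental_Theorem_Algebra" "HOL-Library.FuncSet"
begin

text \<open>
  Upper bound: all roots of a polynomial in \<open>P_n(R)\<close> lie in the closed disc of radius \<open>R\<close>,
  so Vieta's formulas bound its \<open>k\<close>-th coefficient by \<open>(n choose k) R^(n-k)\<close>; counting the
  integer points of this box of coefficient vectors gives \<open>O(R^(n(n+1)/2))\<close>.

  Lower bound: write \<open>n = m + 1\<close> and take \<open>p = x^n + a_m x^m + \<dots> + a_0\<close> with
  \<open>-a_m \<in> [5R/8, 7R/8]\<close> and \<open>0 \<le> a_k \<le> e R^(n-k)\<close> for \<open>k < m\<close>, with \<open>e\<close> small depending only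
  on \<open>n\<close>. Then \<open>p\<close> is a small perturbation of \<open>x^m (x + a_m)\<close>, so it has a real root \<open>l\<close> in
  \<open>(R/2, R)\<close>; the quotient \<open>p / (x - l)\<close> again has coefficients small relative to \<open>R\<close>, so all
  its roots have modulus less than \<open>R/2 < l\<close>. Hence \<open>p \<in> P_n(R)\<close>, and there are about
  \<open>e^m R^(n(n+1)/2) / 8\<close> such \<open>p\<close>.
\<close>

lemma monic_root_factor:
  fixes P :: "'a::idom poly"
  assumes "poly P c = 0" "degree P = Suc m" "lead_coeff P = 1"
  obtains Q where "P = [:-c, 1:] * Q" "degree Q = m" "lead_coeff Q = 1"
proof -
  obtain Q where PQ: "P = [:-c, 1:] * Q" using assms(1) poly_eq_0_iff_dvd by blast
  with assms(2) have "Q \<noteq> 0" by auto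
  then have "degree P = degree [:-c, 1:] + degree Q" unfolding PQ by (intro degree_mult_eq) auto
  then have "degree Q = m" using assms(2) by simp
  moreover have "lead_coeff P = lead_coeff [:-c, 1:] * lead_coeff Q" unfolding PQ by (rule lead_coeff_mult)
  then have "lead_coeff Q = 1" using assms(3) by simp
  ultimately show thesis using PQ that by blast
qed

lemma norm_coeff_monic_le_binomial:
  fixes P :: "complex poly"
  assumes "degree P = d" "lead_coeff P = 1" "R \<ge> 0" "\<And>z. poly P z = 0 \<Longrightarrow> cmod z \<le> R"
  shows "cmod (coeff P k) \<le> real (d choose k) * R ^ (d - k)"
  using assms
proof (induction d arbitrary: P k)
  case 0
  then have "P = [:1:]" by (metis degree0_coeffs coeff_pCons_0)
  then show ?case by (cases k) auto
next
  case (Suc d)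
  obtain z where z: "poly P z = 0"
    using alg_closed_imp_poly_has_root[of P] Suc.prems by auto
  obtain Q where PQ: "P = [:-z, 1:] * Q" and "degree Q = d" "lead_coeff Q = 1"
    using monic_root_factor[OF z] Suc.prems by metis
  then have IH: "cmod (coeff Q j) \<le> real (d choose j) * R ^ (d - j)" for j
    using Suc.IH Suc.prems PQ by auto
  have zR: "cmod z \<le> R" using z Suc.prems by auto
  show ?case
  proof (cases k)
    case 0
    have "cmod (coeff P k) = cmod z * cmod (coeff Q 0)" using PQ 0 by (simp add: norm_mult)
    also have "\<dots> \<le> R * R ^ d" using IH[of 0] zR Suc.prems(3) by (intro mult_mono) auto
    finally show ?thesis using 0 by simp
  next
    case (Suc j)
    have "coeff P k = coeff Q j - z * coeff Q k" using PQ Suc by simp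
    then have "cmod (coeff P k) \<le> cmod (coeff Q j) + cmod z * cmod (coeff Q k)"
      by (metis norm_mult norm_triangle_ineq4)
    also have "\<dots> \<le> real (d choose j) * R ^ (d - j) + R * (real (d choose k) * R ^ (d - k))"
      using IH[of k] IH[of j] zR Suc.prems(3) by (intro add_mono mult_mono) auto
    also have "R * (real (d choose k) * R ^ (d - k)) \<le> real (d choose k) * R ^ (d - j)"
    proof (cases "k \<le> d")
      case True
      then have "R * R ^ (d - k) = R ^ (d - j)" using Suc by (metis Suc_diff_le diff_Suc_Suc power_Suc)
      then show ?thesis by (metis mult.left_commute order_refl)
    qed (simp add: binomial_eq_0)
    finally show ?thesis using Suc by (simp add: algebra_simps)
  qed
qed

lemma bij_betw_coeffs_PiE:
  fixes F :: "nat \<Rightarrow> 'a::zero set"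
  assumes "\<And>k. k > n \<Longrightarrow> F k = {0}"
  shows "bij_betw (\<lambda>p. restrict (coeff p) {..n}) {p. \<forall>k. coeff p k \<in> F k} (PiE {..n} F)"
proof (rule bij_betw_byWitness[where f' = "\<lambda>f. Poly (map f [0..<Suc n])"])
  show "\<forall>p \<in> {p. \<forall>k. coeff p k \<in> F k}. Poly (map (restrict (coeff p) {..n}) [0..<Suc n]) = p"
    using assms by (auto intro!: poly_eqI simp: nth_default_def not_less_eq simp del: upt_Suc)
      (metis singletonD)
  show "\<forall>f \<in> PiE {..n} F. restrict (coeff (Poly (map f [0..<Suc n]))) {..n} = f"
    by (auto simp: nth_default_def PiE_iff extensional_def fun_eq_iff simp del: upt_Suc)
  show "(\<lambda>p. restrict (coeff p) {..n}) ` {p. \<forall>k. coeff p k \<in> F k} \<subseteq> PiE {..n} F"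
    by (simp add: image_subset_iff)
  show "(\<lambda>f. Poly (map f [0..<Suc n])) ` PiE {..n} F \<subseteq> {p. \<forall>k. coeff p k \<in> F k}"
    using assms by (auto simp: nth_default_def PiE_iff simp del: upt_Suc)
qed

lemma finite_polys_coeffs_in:
  fixes F :: "nat \<Rightarrow> 'a::zero set"
  assumes "\<And>k. k > n \<Longrightarrow> F k = {0}" "\<And>k. k \<le> n \<Longrightarrow> finite (F k)"
  shows "finite {p. \<forall>k. coeff p k \<in> F k}"
  using bij_betw_finite[OF bij_betw_coeffs_PiE[of n F]] assms by (auto intro!: finite_PiE)

lemma card_polys_coeffs_in:
  fixes F :: "nat \<Rightarrow> 'a::zero set"
  assumes "\<And>k. k > n \<Longrightarrow> F k = {0}"
  shows "card {p. \<forall>k. coeff p k \<in> F k} = (\<Prod>k\<le>n. card (F k))"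
  using bij_betw_same_card[OF bij_betw_coeffs_PiE[of n F]] assms by (simp add: card_PiE)

lemma sum_diff_atMost: "(\<Sum>k\<le>n. n - k) = n * (n + 1) div (2::nat)"
proof -
  have "(\<Sum>k\<le>n. n - k) = (\<Sum>k\<le>n. k)"
    by (rule sum.reindex_bij_witness[of _ "\<lambda>k. n - k" "\<lambda>k. n - k"]) auto
  also have "\<dots> = n * (n + 1) div 2" by (metis gauss_sum_nat atMost_atLeast0 Suc_eq_plus1)
  finally show ?thesis .
qed

lemma perron_polys_subset_coeff_box:
  assumes "R \<ge> 0"
  shows "perron_polys n R \<subseteq>
    {p. \<forall>k. coeff p k \<in> {-\<lfloor>real (n choose k) * R ^ (n - k)\<rfloor>..\<lfloor>real (n choose k) * R ^ (n - k)\<rfloor>}}"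
proof safe
  fix p k assume p: "p \<in> perron_polys n R"
  let ?B = "real (n choose k) * R ^ (n - k)"
  have "cmod (coeff (map_poly of_int p) k) \<le> ?B"
    using p assms by (intro norm_coeff_monic_le_binomial) (auto simp: perron_polys_def degree_map_poly coeff_map_poly)
  then have "\<bar>coeff p k\<bar> \<le> ?B" by (simp add: coeff_map_poly)
  then show "coeff p k \<in> {-\<lfloor>?B\<rfloor>..\<lfloor>?B\<rfloor>}" by (simp add: le_floor_iff abs_le_iff floor_le_iff) linarith
qed

lemma card_perron_polys_upper:
  assumes R: "R \<ge> 1"
  shows "finite (perron_polys n R)"
    and "real (card (perron_polys n R)) \<le> (3 * 2 ^ n) ^ (n + 1) * R ^ (n * (n + 1) div 2)"
proof -
  define B where "B k = real (n choose k) * R ^ (n - k)" for k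
  define F where "F k = {-\<lfloor>B k\<rfloor>..\<lfloor>B k\<rfloor>}" for k
  have F0: "F k = {0}" if "k > n" for k using that by (simp add: F_def B_def)
  have sub: "perron_polys n R \<subseteq> {p. \<forall>k. coeff p k \<in> F k}"
    using perron_polys_subset_coeff_box[of R n] R by (simp add: F_def B_def)
  moreover have fin: "finite {p. \<forall>k. coeff p k \<in> F k}"
    using finite_polys_coeffs_in[OF F0] by (simp add: F_def)
  ultimately show "finite (perron_polys n R)" by (rule finite_subset)
  have "card (perron_polys n R) \<le> (\<Prod>k\<le>n. card (F k))"
    using card_mono[OF fin sub] card_polys_coeffs_in[OF F0] by simp
  then have "real (card (perron_polys n R)) \<le> (\<Prod>k\<le>n. real (card (F k)))"
    by (metis of_nat_le_iff of_nat_prod)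
  also have "\<dots> \<le> (\<Prod>k\<le>n. 3 * 2 ^ n * R ^ (n - k))"
  proof (rule prod_mono)
    fix k assume "k \<in> {..n}"
    then have "1 \<le> real (n choose k)" by (simp add: Suc_leI)
    moreover have "1 \<le> R ^ (n - k)" using R by simp
    ultimately have B1: "1 \<le> B k" unfolding B_def by (metis mult_mono' mult_1 zero_le_one)
    have "B k \<le> 2 ^ n * R ^ (n - k)" unfolding B_def
      using binomial_le_pow2[of n k] R by (intro mult_right_mono) (auto simp: of_nat_le_iff[symmetric])
    moreover have "real (card (F k)) = 2 * real_of_int \<lfloor>B k\<rfloor> + 1" using B1 by (simp add: F_def)
    ultimately show "0 \<le> real (card (F k)) \<and> real (card (F k)) \<le> 3 * 2 ^ n * R ^ (n - k)"
      using B1 by linarith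
  qed
  also have "\<dots> = (3 * 2 ^ n) ^ (n + 1) * R ^ (n * (n + 1) div 2)"
    by (simp add: prod.distrib sum_diff_atMost flip: power_sum)
  finally show "real (card (perron_polys n R)) \<le> (3 * 2 ^ n) ^ (n + 1) * R ^ (n * (n + 1) div 2)" .
qed

lemma linear_factor_coeff_partial_sum:
  fixes Q :: "'a::comm_ring_1 poly"
  assumes "P = [:-c, 1:] * Q"
  shows "(\<Sum>i\<le>k. coeff P i * c ^ i) = - coeff Q k * c ^ Suc k"
proof (induction k)
  case (Suc k)
  have "coeff P (Suc k) = coeff Q k - c * coeff Q (Suc k)" using assms by simp
  then have "(\<Sum>i\<le>Suc k. coeff P i * c ^ i)
      = - coeff Q k * c ^ Suc k + (coeff Q k - c * coeff Q (Suc k)) * c ^ Suc k"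
    using Suc.IH by simp
  then show ?case by (simp add: algebra_simps)
qed (use assms in simp)

lemma norm_root_lt_of_small_coeffs:
  fixes Q :: "'a::real_normed_field poly"
  assumes "degree Q = m" "lead_coeff Q = 1"
    and small: "\<And>k. k < m \<Longrightarrow> norm (coeff Q k) \<le> \<eta> * r ^ (m - k)"
    and "\<eta> \<ge> 0" "r > 0" "real m * \<eta> < 1" and z: "poly Q z = 0"
  shows "norm z < r"
proof (rule ccontr)
  assume "\<not> norm z < r"
  then have zr: "r \<le> norm z" by simp
  have term_le: "norm (coeff Q k * z ^ k) \<le> \<eta> * norm z ^ m" if "k < m" for k
  proof -
    have "norm (coeff Q k * z ^ k) = norm (coeff Q k) * norm z ^ k"
      by (simp add: norm_mult norm_power)
    also have "\<dots> \<le> \<eta> * r ^ (m - k) * norm z ^ k"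
      using small[OF that] by (rule mult_right_mono) simp
    also have "\<dots> \<le> \<eta> * norm z ^ (m - k) * norm z ^ k"
      using zr assms(4,5) by (intro mult_right_mono mult_left_mono power_mono) auto
    also have "\<dots> = \<eta> * norm z ^ m" using that by (simp add: mult.assoc flip: power_add)
    finally show ?thesis .
  qed
  have "poly Q z = (\<Sum>k<m. coeff Q k * z ^ k) + z ^ m"
    using assms(1,2) by (simp add: poly_altdef lessThan_Suc_atMost[symmetric])
  then have "z ^ m = - (\<Sum>k<m. coeff Q k * z ^ k)"
    using z by (metis add.commute eq_neg_iff_add_eq_0)
  then have "norm z ^ m = norm (\<Sum>k<m. coeff Q k * z ^ k)"
    by (metis norm_minus_cancel norm_power)
  also have "\<dots> \<le> (\<Sum>k<m. norm (coeff Q k * z ^ k))" by (rule norm_sum)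
  also have "\<dots> \<le> (\<Sum>k<m. \<eta> * norm z ^ m)" by (intro sum_mono term_le) simp
  also have "\<dots> = (real m * \<eta>) * norm z ^ m" by simp
  also have "\<dots> < norm z ^ m"
  proof -
    have "norm z ^ m > 0" using assms(5) zr by (intro zero_less_power) linarith
    then show ?thesis using mult_strict_right_mono[OF assms(6)] by simp
  qed
  finally show False by simp
qed

lemma norm_coeff_quotient_le:
  fixes P Q :: "complex poly"
  assumes PQ: "P = [:-complex_of_real l, 1:] * Q" and "R > 0" "l \<ge> R / 2" "e \<ge> 0"
    and small: "\<And>i. i < m \<Longrightarrow> cmod (coeff P i) \<le> e * R ^ (Suc m - i)" and k: "k < m"
  shows "cmod (coeff Q k) \<le> real (Suc m) * e * 2 ^ Suc m * R ^ (m - k)"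
proof -
  have l: "l > 0" using assms by linarith
  let ?c = "complex_of_real l"
  have "cmod (coeff Q k) * l ^ Suc k = cmod (\<Sum>i\<le>k. coeff P i * ?c ^ i)"
    using l by (simp add: linear_factor_coeff_partial_sum[OF PQ] norm_mult norm_power)
  also have "\<dots> \<le> (\<Sum>i\<le>k. cmod (coeff P i * ?c ^ i))" by (rule norm_sum)
  also have "\<dots> \<le> (\<Sum>i\<le>k. e * 2 ^ Suc m * R ^ (m - k) * l ^ Suc k)"
  proof (rule sum_mono)
    fix i assume i: "i \<in> {..k}"
    have "cmod (coeff P i * ?c ^ i) \<le> e * R ^ (Suc m - i) * l ^ i"
      using small[of i] i k l by (simp add: norm_mult norm_power mult_right_mono)
    also have "R ^ (Suc m - i) = R ^ (m - k) * R ^ (Suc k - i)"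
      using i k by (simp flip: power_add)
    also have "e * (R ^ (m - k) * R ^ (Suc k - i)) * l ^ i \<le> e * (R ^ (m - k) * (2 * l) ^ (Suc k - i)) * l ^ i"
      using assms l by (intro mult_right_mono mult_left_mono power_mono) auto
    also have "\<dots> = e * R ^ (m - k) * 2 ^ (Suc k - i) * l ^ Suc k"
      using i by (simp add: power_mult_distrib mult.assoc flip: power_add)
    also have "\<dots> \<le> e * R ^ (m - k) * 2 ^ Suc m * l ^ Suc k"
      using assms l k by (intro mult_right_mono mult_left_mono power_increasing) auto
    finally show "cmod (coeff P i * ?c ^ i) \<le> e * 2 ^ Suc m * R ^ (m - k) * l ^ Suc k"
      by (simp add: algebra_simps)
  qed
  also have "\<dots> = real (Suc k) * (e * 2 ^ Suc m * R ^ (m - k)) * l ^ Suc k" by simp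
  also have "\<dots> \<le> real (Suc m) * (e * 2 ^ Suc m * R ^ (m - k)) * l ^ Suc k"
    using k assms l by (intro mult_right_mono) auto
  finally show ?thesis using l by (simp add: mult_le_cancel_right)
qed

lemma abs_sum_lower_terms_le:
  fixes b :: "nat \<Rightarrow> real"
  assumes small: "\<And>k. k < m \<Longrightarrow> \<bar>b k\<bar> \<le> e * R ^ (Suc m - k)"
    and "R > 0" "x \<ge> R / 2" "e \<ge> 0"
  shows "\<bar>\<Sum>k<m. b k * x ^ k\<bar> \<le> real m * e * 2 ^ Suc m * R * x ^ m"
proof -
  have x: "x > 0" using assms by linarith
  have term_le: "\<bar>b k * x ^ k\<bar> \<le> e * 2 ^ Suc m * R * x ^ m" if k: "k < m" for k
  proof -
    have "\<bar>b k * x ^ k\<bar> \<le> e * R ^ (Suc m - k) * x ^ k"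
      using small[OF k] x by (simp add: abs_mult mult_right_mono)
    also have "\<dots> = e * R * (R ^ (m - k) * x ^ k)" using k by (simp add: Suc_diff_le)
    also have "\<dots> \<le> e * R * ((2 * x) ^ (m - k) * x ^ k)"
      using assms x by (intro mult_right_mono mult_left_mono power_mono) auto
    also have "\<dots> = e * R * 2 ^ (m - k) * x ^ m"
      using k by (simp add: power_mult_distrib mult.assoc flip: power_add)
    also have "\<dots> \<le> e * R * 2 ^ Suc m * x ^ m"
      using assms x by (intro mult_right_mono mult_left_mono power_increasing) auto
    finally show ?thesis by (simp add: algebra_simps)
  qed
  have "\<bar>\<Sum>k<m. b k * x ^ k\<bar> \<le> (\<Sum>k<m. \<bar>b k * x ^ k\<bar>)" by (rule sum_abs)
  also have "\<dots> \<le> (\<Sum>k<m. e * 2 ^ Suc m * R * x ^ m)" using term_le by (intro sum_mono) auto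
  finally show ?thesis by (simp add: algebra_simps)
qed

lemma poly_has_root_near_subleading_coeff:
  fixes P :: "real poly"
  assumes "degree P = Suc m" "lead_coeff P = 1" "R > 0"
    and M: "5 * R / 8 \<le> - coeff P m" "- coeff P m \<le> 7 * R / 8"
    and tail: "\<And>x. x \<ge> R / 2 \<Longrightarrow> \<bar>\<Sum>k<m. coeff P k * x ^ k\<bar> \<le> R * x ^ m / 32"
  obtains l where "R / 2 < l" "l < R" "poly P l = 0"
proof -
  have split: "poly P x = x ^ m * (x + coeff P m) + (\<Sum>k<m. coeff P k * x ^ k)" for x
    using assms(1,2) by (simp add: poly_altdef lessThan_Suc_atMost[symmetric] algebra_simps)
  define a where "a = - coeff P m - R / 16"
  define b where "b = - coeff P m + R / 16"
  have a: "R / 2 \<le> a" and b: "b \<le> R" "a < b" using M assms(3) by (auto simp: a_def b_def)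
  have "poly P a = a ^ m * (- R / 16) + (\<Sum>k<m. coeff P k * a ^ k)"
    using split[of a] by (simp add: a_def)
  moreover have "(\<Sum>k<m. coeff P k * a ^ k) \<le> R * a ^ m / 32" using tail[OF a] by (simp add: abs_le_iff)
  moreover have "R * a ^ m / 32 < a ^ m * (R / 16)" using a assms(3) by simp
  ultimately have "poly P a < 0" by linarith
  have "poly P b = b ^ m * (R / 16) + (\<Sum>k<m. coeff P k * b ^ k)"
    using split[of b] by (simp add: b_def)
  moreover have "- (\<Sum>k<m. coeff P k * b ^ k) \<le> R * b ^ m / 32" using tail[of b] a b by (simp add: abs_le_iff)
  moreover have "R * b ^ m / 32 < b ^ m * (R / 16)" using a b assms(3) by simp
  ultimately have "poly P b > 0" by linarith
  with \<open>poly P a < 0\<close> obtain l where "a < l" "l < b" "poly P l = 0"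
    using poly_IVT_pos[OF \<open>a < b\<close>] by blast
  then show thesis using a b by (intro that[of l]) linarith+
qed

lemma perron_polys_memberI:
  fixes p :: "int poly"
  assumes deg: "degree p = Suc m" and lc: "lead_coeff p = 1"
    and M: "5 * R / 8 \<le> - of_int (coeff p m)" "- of_int (coeff p m) \<le> 7 * R / 8"
    and small: "\<And>k. k < m \<Longrightarrow> \<bar>of_int (coeff p k)\<bar> \<le> e * R ^ (Suc m - k)"
    and R: "R \<ge> 2" and e: "e \<ge> 0" and e_small: "real (Suc m) * e * 8 ^ Suc m \<le> 1 / 32"
  shows "p \<in> perron_polys (Suc m) R"
proof -
  define \<eta> where "\<eta> = real (Suc m) * e * 2 ^ Suc m"
  have "(2::real) ^ Suc m \<le> 8 ^ Suc m" by (rule power_mono) auto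
  then have "\<eta> \<le> real (Suc m) * e * 8 ^ Suc m" unfolding \<eta>_def using e by (intro mult_left_mono) auto
  then have \<eta>: "\<eta> \<le> 1 / 32" using e_small by linarith
  have \<eta>_root: "real m * (\<eta> * 2 ^ m) < 1"
  proof -
    have "m \<le> 2 ^ Suc m" using less_exp[of "Suc m"] by simp
    then have "real m \<le> 2 ^ Suc m" by (metis of_nat_le_iff of_nat_numeral of_nat_power)
    then have "real m * 2 ^ m * 2 ^ Suc m \<le> 2 ^ Suc m * 2 ^ Suc m * 2 ^ Suc m"
      by (intro mult_mono) auto
    also have "\<dots> = (8::real) ^ Suc m" by (simp flip: power_mult_distrib)
    finally have "real m * (\<eta> * 2 ^ m) \<le> real (Suc m) * e * 8 ^ Suc m"
      using e by (simp add: \<eta>_def mult.left_commute mult_left_mono)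
    then show ?thesis using e_small by linarith
  qed
  define Pr where "Pr = map_poly (of_int :: int \<Rightarrow> real) p"
  define Pc where "Pc = map_poly (of_int :: int \<Rightarrow> complex) p"
  have Pr: "degree Pr = Suc m" "lead_coeff Pr = 1" and Pc: "degree Pc = Suc m" "lead_coeff Pc = 1"
    using deg lc by (simp_all add: Pr_def Pc_def degree_map_poly coeff_map_poly)
  have tail: "\<bar>\<Sum>k<m. coeff Pr k * x ^ k\<bar> \<le> R * x ^ m / 32" if x: "x \<ge> R / 2" for x
  proof -
    have "\<bar>\<Sum>k<m. coeff Pr k * x ^ k\<bar> \<le> real m * e * 2 ^ Suc m * R * x ^ m"
      using small R e x by (intro abs_sum_lower_terms_le) (auto simp: Pr_def coeff_map_poly)
    also have "\<dots> \<le> \<eta> * (R * x ^ m)"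
    proof -
      have "0 \<le> e * 2 ^ Suc m * (R * x ^ m)" using e R x by simp
      from mult_right_mono[OF _ this, of "real m" "real (Suc m)"] show ?thesis
        by (simp add: \<eta>_def mult.assoc)
    qed
    also have "\<dots> \<le> 1 / 32 * (R * x ^ m)" using \<eta> R x by (intro mult_right_mono) auto
    finally show ?thesis by simp
  qed
  obtain l where l: "R / 2 < l" "l < R" "poly Pr l = 0"
    using poly_has_root_near_subleading_coeff[OF Pr, of R] M R tail by (auto simp: Pr_def coeff_map_poly)
  have "poly Pc (of_real l) = of_real (poly Pr l)"
    by (simp add: Pc_def Pr_def poly_altdef of_real_sum degree_map_poly coeff_map_poly)
  with l have root: "poly Pc (of_real l) = 0" by simp
  then obtain Q where PQ: "Pc = [:-of_real l, 1:] * Q" and Q: "degree Q = m" "lead_coeff Q = 1"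
    using monic_root_factor Pc by metis
  have "cmod (coeff Q k) \<le> \<eta> * 2 ^ m * (R / 2) ^ (m - k)" if k: "k < m" for k
  proof -
    have "cmod (coeff Q k) \<le> \<eta> * R ^ (m - k)"
      using norm_coeff_quotient_le[OF PQ, of R e m k] small R e l k
      by (simp add: \<eta>_def Pc_def coeff_map_poly)
    also have "\<dots> = \<eta> * 2 ^ (m - k) * (R / 2) ^ (m - k)" by (simp flip: power_mult_distrib)
    also have "\<dots> \<le> \<eta> * 2 ^ m * (R / 2) ^ (m - k)"
      using e R by (intro mult_right_mono mult_left_mono power_increasing) (auto simp: \<eta>_def)
    finally show ?thesis .
  qed
  then have Q_roots: "cmod z < R / 2" if "poly Q z = 0" for z
    using e R by (intro norm_root_lt_of_small_coeffs[OF Q _ _ _ \<eta>_root that]) (auto simp: \<eta>_def)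
  have "z = of_real l \<or> cmod z < R / 2" if "poly Pc z = 0" for z
    using that Q_roots by (auto simp: PQ)
  then show ?thesis
    using deg lc l root R unfolding perron_polys_def Pc_def
    by (intro CollectI conjI exI[of _ l]) force+
qed

lemma card_perron_polys_lower:
  assumes R: "R \<ge> 8" and e: "e > 0" and e_small: "real (Suc m) * e * 8 ^ Suc m \<le> 1 / 32"
    and fin: "finite (perron_polys (Suc m) R)"
  shows "e ^ m / 8 * R ^ (Suc m * (Suc m + 1) div 2) \<le> real (card (perron_polys (Suc m) R))"
proof -
  define F where "F k = (if k < m then {0..\<lfloor>e * R ^ (Suc m - k)\<rfloor>}
      else if k = m then {-\<lfloor>7 * R / 8\<rfloor>..-\<lceil>5 * R / 8\<rceil>} else if k = Suc m then {1} else {0::int})" for k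
  define c where "c k = (if k < m then e else if k = m then 1 / 8 else 1 :: real)" for k
  have F0: "F k = {0}" if "k > Suc m" for k using that by (simp add: F_def)
  have sub: "{p. \<forall>k. coeff p k \<in> F k} \<subseteq> perron_polys (Suc m) R"
  proof safe
    fix p assume p: "\<forall>k. coeff p k \<in> F k"
    have lc: "coeff p (Suc m) = 1" using p[rule_format, of "Suc m"] by (simp add: F_def)
    moreover have "degree p = Suc m"
    proof (rule antisym)
      show "degree p \<le> Suc m" using p F0 by (intro degree_le) auto
      show "Suc m \<le> degree p" using lc by (intro le_degree) simp
    qed
    moreover have "coeff p m \<in> {-\<lfloor>7 * R / 8\<rfloor>..-\<lceil>5 * R / 8\<rceil>}"
      using p[rule_format, of m] by (simp add: F_def)
    moreover have "coeff p k \<in> {0..\<lfloor>e * R ^ (Suc m - k)\<rfloor>}" if "k < m" for k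
      using p[rule_format, of k] that by (simp add: F_def)
    ultimately show "p \<in> perron_polys (Suc m) R"
      using R e e_small by (intro perron_polys_memberI) (auto simp: le_floor_iff ceiling_le_iff, linarith+)
  qed
  have "(\<Prod>k\<le>Suc m. c k * R ^ (Suc m - k)) \<le> (\<Prod>k\<le>Suc m. real (card (F k)))"
  proof (rule prod_mono)
    fix k assume "k \<in> {..Suc m}"
    then consider "k < m" | "k = m" | "k = Suc m" by fastforce
    then show "0 \<le> c k * R ^ (Suc m - k) \<and> c k * R ^ (Suc m - k) \<le> real (card (F k))"
    proof cases
      case 1
      have "0 \<le> e * R ^ (Suc m - k)" using e R by simp
      then show ?thesis using 1 by (simp add: c_def F_def)
    next
      case 2
      then show ?thesis using R by (simp add: c_def F_def) linarith
    qed (simp_all add: c_def F_def)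
  qed
  also have "\<dots> = real (card {p. \<forall>k. coeff p k \<in> F k})"
    by (simp add: card_polys_coeffs_in[OF F0])
  also have "\<dots> \<le> real (card (perron_polys (Suc m) R))" using card_mono[OF fin sub] by simp
  finally have le: "(\<Prod>k\<le>Suc m. c k * R ^ (Suc m - k)) \<le> real (card (perron_polys (Suc m) R))" .
  have "(\<Prod>k<m. c k) = e ^ m" by (simp add: c_def)
  then have "(\<Prod>k\<le>Suc m. c k) = e ^ m / 8" by (simp add: c_def lessThan_Suc_atMost[symmetric])
  then have "(\<Prod>k\<le>Suc m. c k * R ^ (Suc m - k)) = e ^ m / 8 * R ^ (Suc m * (Suc m + 1) div 2)"
    by (simp only: prod.distrib sum_diff_atMost flip: power_sum)
  with le show ?thesis by simp
qed

theorem lemma6: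
  fixes n :: nat
  assumes "n \<ge> 1"
  shows "\<exists>C>0. \<forall>\<^sub>F R in at_top.
           (1 / C) * R ^ (n * (n + 1) div 2) \<le> real (card (perron_polys n R)) \<and>
           real (card (perron_polys n R)) \<le> C * R ^ (n * (n + 1) div 2)"
proof -
  obtain m where n: "n = Suc m" using assms by (cases n) auto
  define e :: real where "e = 1 / (32 * real (Suc m) * 8 ^ Suc m)"
  have e: "e > 0" "real (Suc m) * e * 8 ^ Suc m \<le> 1 / 32" by (simp_all add: e_def)
  define C :: real where "C = max ((3 * 2 ^ n) ^ (n + 1)) (8 / e ^ m)"
  have "0 < 8 / e ^ m" "8 / e ^ m \<le> C" using e by (simp_all add: C_def)
  moreover from this have "C > 0" by linarith
  moreover from calculation have "1 / C \<le> 1 / (8 / e ^ m)" by (intro divide_left_mono) auto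
  ultimately have C: "C > 0" "1 / C \<le> e ^ m / 8" by simp_all
  show ?thesis
  proof (intro exI[of _ C] conjI C(1) eventually_mono[OF eventually_ge_at_top[of 8]] impI)
    fix R :: real assume R: "R \<ge> 8"
    let ?N = "n * (n + 1) div 2"
    have R_pow: "R ^ ?N \<ge> 0" using R by simp
    have "real (card (perron_polys n R)) \<le> (3 * 2 ^ n) ^ (n + 1) * R ^ ?N"
      using card_perron_polys_upper R by simp
    also have "\<dots> \<le> C * R ^ ?N" using R_pow by (intro mult_right_mono) (auto simp: C_def)
    finally show "real (card (perron_polys n R)) \<le> C * R ^ ?N" .
    have "1 / C * R ^ ?N \<le> e ^ m / 8 * R ^ ?N" using C(2) R_pow by (rule mult_right_mono)
    also have "\<dots> \<le> real (card (perron_polys n R))"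
      using card_perron_polys_lower[OF R e] card_perron_polys_upper(1)[of R n] R n by simp
    finally show "1 / C * R ^ ?N \<le> real (card (perron_polys n R))" .
  qed
qed

end
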